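(* Let $V$ be a $b$-complete semimodule over a $b$-complete idempotent semiring $K$. The following are equivalent: (1) $V$ has the $b$-approximation property, i.e. the identity operator $\mathrm{id}\colon V\to V$ is $b$-nuclear; (2) every $b$-linear mapping from $V$ to an arbitrary $b$-complete semimodule $W$ over $K$ is $b$-nuclear; (3) every $b$-linear mapping from an arbitrary $b$-complete semimodule $W$ over $K$ to $V$ is $b$-nuclear. In particular, $V$ is $b$-nuclear (i.e., condition (2) holds) if and only if $V$ has the $b$-approximation property.
   Context: Idempotent semigroup: commutative, associative, idempotent $\oplus$ with order $x\preceq y$ iff $x\oplus y=y$; $b$-complete: every bounded above subset (incl. $\emptyset$) has a least upper bound. A homomorphism of $b$-complete semigroups is a $b$-homomorphism if it preserves least upper bounds of bounded above subsets. Idempotent semiring: idempotent commutative associative $\oplus$, associative $\odot$ bi-distributive, unit $\mathbf 1$, zero $\mathbf 0$; $b$-complete if $b$-complete and $k\odot(\oplus X)=\oplus(k\odot X)$, $(\oplus X)\odot k=\oplus(X\odot k)$ for bounded $X$. Idempotent semimodule over $K$: idempotent semigroup with associative bi-distributive $K$-action, $\mathbf 1\odot x=x$, $\mathbf 0\odot x=\mathbf 0$; $b$-complete if $b$-complete as semigroup and $(\oplus Q)\odot x=\oplus(Q\odot x)$, $k\odot(\oplus X)=\oplus(k\odot X)$ for bounded $Q,X$. Linear: preserves $\oplus$ and scalar multiplication; $b$-linear: moreover a $b$-homomorphism; a $b$-linear functional is a $b$-linear map into $K$. A one-dimensional mapping $V\to W$ is one of the form $v\mapsto\phi(v)\odot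 w$ with $\phi$ a $b$-linear functional on $V$ and $w\in W$; a mapping is $b$-nuclear if it is the pointwise supremum of a set of one-dimensional mappings that is bounded above (pointwise). $V$ is $b$-nuclear if every $b$-linear mapping from $V$ to any $b$-complete semimodule over $K$ is $b$-nuclear. *)

theory Defs
  imports Main
begin

record ('k, 'a) semimod =
  carrier :: "'a set"
  splus :: "'a \<Rightarrow> 'a \<Rightarrow> 'a"
  smult :: "'k \<Rightarrow> 'a \<Rightarrow> 'a"
  szero :: "'a"

definition sle :: "('k, 'a, 'm) semimod_scheme \<Rightarrow> 'a \<Rightarrow> 'a \<Rightarrow> bool" where
  "sle V x y \<longleftrightarrow> splus V x y = y"

definition upper :: "('k, 'a, 'm) semimod_scheme \<Rightarrow> 'a set \<Rightarrow> 'a \<Rightarrow> bool" where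
  "upper V X u \<longleftrightarrow> u \<in> carrier V \<and> (\<forall>x\<in>X. sle V x u)"

definition bdd :: "('k, 'a, 'm) semimod_scheme \<Rightarrow> 'a set \<Rightarrow> bool" where
  "bdd V X \<longleftrightarrow> (\<exists>u. upper V X u)"

definition is_lub :: "('k, 'a, 'm) semimod_scheme \<Rightarrow> 'a set \<Rightarrow> 'a \<Rightarrow> bool" where
  "is_lub V X s \<longleftrightarrow> upper V X s \<and> (\<forall>u. upper V X u \<longrightarrow> sle V s u)"

text \<open>The semiring K viewed as a semimodule over itself (used for its order, lubs,
  and as the target of linear functionals).\<close>

definition Kmod :: "('k::{semiring_0, monoid_mult}, 'k) semimod" where
  "Kmod = \<lparr>carrier = UNIV, splus = (+), smult = (*), szero = 0\<rparr>"

text \<open>A b-complete idempotent semiring structure on the type 'k (the operations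
  +, *, 0, 1 of the classes semiring_0 and monoid_mult give associativity,
  commutativity of +, bi-distributivity, units and the annihilating zero).\<close>

definition b_complete_semiring :: "'k::{semiring_0, monoid_mult} itself \<Rightarrow> bool" where
  "b_complete_semiring _ \<longleftrightarrow>
     (\<forall>x::'k. x + x = x) \<and>
     (\<forall>Q::'k set. bdd Kmod Q \<longrightarrow> (\<exists>s. is_lub Kmod Q s)) \<and>
     (\<forall>(X::'k set) s k. is_lub Kmod X s \<longrightarrow>
        is_lub Kmod ((\<lambda>x. k * x) ` X) (k * s) \<and> is_lub Kmod ((\<lambda>x. x * k) ` X) (s * k))"

definition idem_semimodule :: "('k::{semiring_0, monoid_mult}, 'a) semimod \<Rightarrow> bool" where
  "idem_semimodule V \<longleftrightarrow>
     szero V \<in> carrier V \<and>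
     (\<forall>x\<in>carrier V. \<forall>y\<in>carrier V. splus V x y \<in> carrier V) \<and>
     (\<forall>k. \<forall>x\<in>carrier V. smult V k x \<in> carrier V) \<and>
     (\<forall>x\<in>carrier V. \<forall>y\<in>carrier V. \<forall>z\<in>carrier V.
        splus V (splus V x y) z = splus V x (splus V y z)) \<and>
     (\<forall>x\<in>carrier V. \<forall>y\<in>carrier V. splus V x y = splus V y x) \<and>
     (\<forall>x\<in>carrier V. splus V x x = x) \<and>
     (\<forall>x\<in>carrier V. splus V (szero V) x = x) \<and>
     (\<forall>a b. \<forall>x\<in>carrier V. smult V (a * b) x = smult V a (smult V b x)) \<and>
     (\<forall>a b. \<forall>x\<in>carrier V. smult V (a + b) x = splus V (smult V a x) (smult V b x)) \<and>
     (\<forall>a. \<forall>x\<in>carrier V. \<forall>y\<in>carrier V.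
        smult V a (splus V x y) = splus V (smult V a x) (smult V a y)) \<and>
     (\<forall>x\<in>carrier V. smult V 1 x = x) \<and>
     (\<forall>x\<in>carrier V. smult V 0 x = szero V)"

definition b_complete_semimod :: "('k::{semiring_0, monoid_mult}, 'a) semimod \<Rightarrow> bool" where
  "b_complete_semimod V \<longleftrightarrow>
     idem_semimodule V \<and>
     (\<forall>X. X \<subseteq> carrier V \<and> bdd V X \<longrightarrow> (\<exists>s. is_lub V X s)) \<and>
     (\<forall>Q s x. x \<in> carrier V \<and> is_lub Kmod Q s \<longrightarrow>
        is_lub V ((\<lambda>q. smult V q x) ` Q) (smult V s x)) \<and>
     (\<forall>X s k. X \<subseteq> carrier V \<and> is_lub V X s \<longrightarrow>
        is_lub V (smult V k ` X) (smult V k s))"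

definition linear_map ::
  "('k::{semiring_0, monoid_mult}, 'a) semimod \<Rightarrow> ('k, 'b) semimod \<Rightarrow> ('a \<Rightarrow> 'b) \<Rightarrow> bool" where
  "linear_map V W f \<longleftrightarrow>
     (\<forall>x\<in>carrier V. f x \<in> carrier W) \<and>
     (\<forall>x\<in>carrier V. \<forall>y\<in>carrier V. f (splus V x y) = splus W (f x) (f y)) \<and>
     (\<forall>k. \<forall>x\<in>carrier V. f (smult V k x) = smult W k (f x))"

definition b_linear ::
  "('k::{semiring_0, monoid_mult}, 'a) semimod \<Rightarrow> ('k, 'b) semimod \<Rightarrow> ('a \<Rightarrow> 'b) \<Rightarrow> bool" where
  "b_linear V W f \<longleftrightarrow> linear_map V W f \<and>
     (\<forall>X s. X \<subseteq> carrier V \<and> is_lub V X s \<longrightarrow> is_lub W (f ` X) (f s))"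

definition b_nuclear ::
  "('k::{semiring_0, monoid_mult}, 'a) semimod \<Rightarrow> ('k, 'b) semimod \<Rightarrow> ('a \<Rightarrow> 'b) \<Rightarrow> bool" where
  "b_nuclear V W f \<longleftrightarrow>
     (\<exists>S :: (('a \<Rightarrow> 'k) \<times> 'b) set.
        (\<forall>(\<phi>, w)\<in>S. b_linear V Kmod \<phi> \<and> w \<in> carrier W) \<and>
        (\<forall>x\<in>carrier V. bdd W ((\<lambda>(\<phi>, w). smult W (\<phi> x) w) ` S) \<and>
                         is_lub W ((\<lambda>(\<phi>, w). smult W (\<phi> x) w) ` S) (f x)))"

definition has_b_approx :: "('k::{semiring_0, monoid_mult}, 'a) semimod \<Rightarrow> bool" where
  "has_b_approx V \<longleftrightarrow> b_nuclear V V id"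

definition all_maps_from_nuclear ::
  "('k::{semiring_0, monoid_mult}, 'a) semimod \<Rightarrow> 'w itself \<Rightarrow> bool" where
  "all_maps_from_nuclear V _ \<longleftrightarrow>
     (\<forall>(W :: ('k, 'w) semimod) f. b_complete_semimod W \<and> b_linear V W f \<longrightarrow> b_nuclear V W f)"

definition all_maps_into_nuclear ::
  "('k::{semiring_0, monoid_mult}, 'a) semimod \<Rightarrow> 'w itself \<Rightarrow> bool" where
  "all_maps_into_nuclear V _ \<longleftrightarrow>
     (\<forall>(W :: ('k, 'w) semimod) f. b_complete_semimod W \<and> b_linear W V f \<longrightarrow> b_nuclear W V f)"

end

theory Submission
  imports Defs
begin

text \<open>
  Proof idea.  b-nuclearity is stable under composition with b-linear maps on
  either side.  If h = sup_i phi_i(-) . w_i (pointwise) is b-nuclear and f is b-linear, then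
  (i) f o h = sup_i phi_i(-) . f(w_i), because f preserves scalar multiples and
      least upper bounds, and
  (ii) h o f = sup_i (phi_i o f)(-) . w_i, because phi_i o f is again a b-linear functional.
  Applying (i) and (ii) to h = id shows that the b-approximation property implies
  that every b-linear map out of V, resp. into V, is b-nuclear (for target/source
  semimodules of any carrier type).  Conversely, each of these properties,
  specialised to the b-linear map id : V \<rightarrow> V, is the b-approximation property.
\<close>

lemma is_lub_bdd: "is_lub W X s \<Longrightarrow> bdd W X"
  unfolding is_lub_def bdd_def by blast

lemma b_linear_id: "b_linear V V id"
  unfolding b_linear_def linear_map_def by simp

lemma b_linear_comp:
  assumes f: "b_linear U V f" and g: "b_linear V W g"
  shows "b_linear U W (g \<circ> f)"
proof -
  have lub: "is_lub W ((g \<circ> f) ` X) ((g \<circ> f) s)"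
    if "X \<subseteq> carrier U" "is_lub U X s" for X s
  proof -
    have "f ` X \<subseteq> carrier V" "is_lub V (f ` X) (f s)"
      using f that unfolding b_linear_def linear_map_def by auto
    then have "is_lub W (g ` f ` X) (g (f s))"
      using g unfolding b_linear_def by blast
    then show ?thesis by (simp add: image_comp)
  qed
  have "linear_map U W (g \<circ> f)"
    using f g unfolding b_linear_def linear_map_def by simp
  then show ?thesis
    using lub unfolding b_linear_def by blast
qed

text \<open>The closure of V under scalar multiplication ensures the one-dimensional
  terms lie in V, where f preserves their least upper bound.\<close>
lemma b_nuclear_comp_b_linear:
  assumes h: "b_nuclear U V h" and f: "b_linear V W f"
    and smult_closed: "\<forall>k. \<forall>x\<in>carrier V. smult V k x \<in> carrier V"
  shows "b_nuclear U W (f \<circ> h)"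
proof -
  obtain S where S_terms: "\<forall>(\<phi>, w)\<in>S. b_linear U Kmod \<phi> \<and> w \<in> carrier V"
    and S_sup: "\<forall>x\<in>carrier U. is_lub V ((\<lambda>(\<phi>, w). smult V (\<phi> x) w) ` S) (h x)"
    using h unfolding b_nuclear_def by blast
  have f_carrier: "\<forall>x\<in>carrier V. f x \<in> carrier W"
    and f_smult: "\<forall>k. \<forall>x\<in>carrier V. f (smult V k x) = smult W k (f x)"
    and f_lub: "\<forall>X s. X \<subseteq> carrier V \<and> is_lub V X s \<longrightarrow> is_lub W (f ` X) (f s)"
    using f unfolding b_linear_def linear_map_def by auto
  define S' where "S' = (\<lambda>(\<phi>, w). (\<phi>, f w)) ` S"
  have sup: "bdd W ((\<lambda>(\<phi>, w). smult W (\<phi> x) w) ` S') \<and>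
      is_lub W ((\<lambda>(\<phi>, w). smult W (\<phi> x) w) ` S') ((f \<circ> h) x)"
    if x: "x \<in> carrier U" for x
  proof -
    let ?X = "(\<lambda>(\<phi>, w). smult V (\<phi> x) w) ` S"
    have "?X \<subseteq> carrier V" using S_terms smult_closed by auto
    then have "is_lub W (f ` ?X) (f (h x))" using f_lub S_sup x by blast
    moreover have "f ` ?X = (\<lambda>(\<phi>, w). smult W (\<phi> x) w) ` S'"
      unfolding S'_def image_image using S_terms f_smult
      by (intro image_cong refl) auto
    ultimately show ?thesis by (simp add: is_lub_bdd)
  qed
  have terms: "\<forall>(\<phi>, w)\<in>S'. b_linear U Kmod \<phi> \<and> w \<in> carrier W"
    using S_terms f_carrier unfolding S'_def by auto
  show ?thesis
    unfolding b_nuclear_def by (rule exI[of _ S'], rule conjI[OF terms], rule ballI, rule sup)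
qed

lemma b_linear_comp_b_nuclear:
  assumes f: "b_linear U V f" and h: "b_nuclear V W h"
  shows "b_nuclear U W (h \<circ> f)"
proof -
  obtain S where S_terms: "\<forall>(\<phi>, w)\<in>S. b_linear V Kmod \<phi> \<and> w \<in> carrier W"
    and S_sup: "\<forall>x\<in>carrier V. is_lub W ((\<lambda>(\<phi>, w). smult W (\<phi> x) w) ` S) (h x)"
    using h unfolding b_nuclear_def by blast
  define S' where "S' = (\<lambda>(\<phi>, w). (\<phi> \<circ> f, w)) ` S"
  have terms: "\<forall>(\<phi>, w)\<in>S'. b_linear U Kmod \<phi> \<and> w \<in> carrier W"
    using S_terms b_linear_comp[OF f, of Kmod] unfolding S'_def by auto
  have sup: "bdd W ((\<lambda>(\<phi>, w). smult W (\<phi> x) w) ` S') \<and>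
      is_lub W ((\<lambda>(\<phi>, w). smult W (\<phi> x) w) ` S') ((h \<circ> f) x)"
    if "x \<in> carrier U" for x
  proof -
    have "(\<lambda>(\<phi>, w). smult W (\<phi> x) w) ` S' = (\<lambda>(\<phi>, w). smult W (\<phi> (f x)) w) ` S"
      unfolding S'_def image_image by (intro image_cong refl) auto
    moreover have "f x \<in> carrier V"
      using f that unfolding b_linear_def linear_map_def by blast
    ultimately have "is_lub W ((\<lambda>(\<phi>, w). smult W (\<phi> x) w) ` S') (h (f x))"
      using S_sup by simp
    then show ?thesis by (simp add: is_lub_bdd)
  qed
  show ?thesis
    unfolding b_nuclear_def by (rule exI[of _ S'], rule conjI[OF terms], rule ballI, rule sup)
qed

lemma approx_imp_maps_from_nuclear:
  fixes V :: "('k::{semiring_0, monoid_mult}, 'v) semimod"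
  assumes approx: "has_b_approx V" and V: "b_complete_semimod V"
  shows "all_maps_from_nuclear V TYPE('w)"
  unfolding all_maps_from_nuclear_def
proof (intro allI impI)
  fix W :: "('k, 'w) semimod" and f
  assume "b_complete_semimod W \<and> b_linear V W f"
  then have f: "b_linear V W f" ..
  have smult_closed: "\<forall>k. \<forall>x\<in>carrier V. smult V k x \<in> carrier V"
    using V unfolding b_complete_semimod_def idem_semimodule_def by (elim conjE)
  have "b_nuclear V W (f \<circ> id)"
    using b_nuclear_comp_b_linear[OF approx[unfolded has_b_approx_def] f smult_closed] .
  then show "b_nuclear V W f" by simp
qed

lemma approx_imp_maps_into_nuclear:
  fixes V :: "('k::{semiring_0, monoid_mult}, 'v) semimod"
  assumes approx: "has_b_approx V"
  shows "all_maps_into_nuclear V TYPE('w)"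
  unfolding all_maps_into_nuclear_def
proof (intro allI impI)
  fix W :: "('k, 'w) semimod" and f
  assume "b_complete_semimod W \<and> b_linear W V f"
  then have f: "b_linear W V f" ..
  have "b_nuclear W V (id \<circ> f)"
    using b_linear_comp_b_nuclear[OF f approx[unfolded has_b_approx_def]] .
  then show "b_nuclear W V f" by simp
qed

lemma maps_from_nuclear_imp_approx:
  fixes V :: "('k::{semiring_0, monoid_mult}, 'v) semimod"
  assumes maps: "all_maps_from_nuclear V TYPE('v)" and V: "b_complete_semimod V"
  shows "has_b_approx V"
proof -
  have "b_complete_semimod V \<and> b_linear V V id \<longrightarrow> b_nuclear V V id"
    using maps unfolding all_maps_from_nuclear_def by (elim allE[where x=V] allE[where x=id])
  then show ?thesis
    unfolding has_b_approx_def using V b_linear_id[of V] by blast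
qed

lemma maps_into_nuclear_imp_approx:
  fixes V :: "('k::{semiring_0, monoid_mult}, 'v) semimod"
  assumes maps: "all_maps_into_nuclear V TYPE('v)" and V: "b_complete_semimod V"
  shows "has_b_approx V"
proof -
  have "b_complete_semimod V \<and> b_linear V V id \<longrightarrow> b_nuclear V V id"
    using maps unfolding all_maps_into_nuclear_def by (elim allE[where x=V] allE[where x=id])
  then show ?thesis
    unfolding has_b_approx_def using V b_linear_id[of V] by blast
qed

theorem proposition7p26:
  fixes V :: "('k::{semiring_0, monoid_mult}, 'v) semimod"
  assumes "b_complete_semiring TYPE('k)"
    and "b_complete_semimod V"
  shows "(has_b_approx V \<longleftrightarrow> all_maps_from_nuclear V TYPE('v)) \<and>
         (has_b_approx V \<longleftrightarrow> all_maps_into_nuclear V TYPE('v)) \<and>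
         (has_b_approx V \<longrightarrow> all_maps_from_nuclear V TYPE('w) \<and> all_maps_into_nuclear V TYPE('w))"
proof -
  have from_V: "has_b_approx V \<longleftrightarrow> all_maps_from_nuclear V TYPE('v)"
    using approx_imp_maps_from_nuclear maps_from_nuclear_imp_approx assms(2) by blast
  have into_V: "has_b_approx V \<longleftrightarrow> all_maps_into_nuclear V TYPE('v)"
    using approx_imp_maps_into_nuclear maps_into_nuclear_imp_approx assms(2) by blast
  have "has_b_approx V \<longrightarrow> all_maps_from_nuclear V TYPE('w) \<and> all_maps_into_nuclear V TYPE('w)"
    using approx_imp_maps_from_nuclear approx_imp_maps_into_nuclear assms(2) by blast
  with from_V into_V show ?thesis by blast
qed

end
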